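(* Let $Z_t$ be an $\mathbb{R}^D$-valued random vector with density $f_{Z_t}$, let $V_t,U_t:\mathbb{R}^D\to\mathbb{R}$ be a value function and its approximation, and let $X_t=V_t(Z_t)^+$, $Y_t=U_t(Z_t)^+$. Let $m$ be a probability measure on $(0,1)$ with density $f_m$ and $\rho_m(X)=\int_0^1Q_X(u)\,m(du)$. Then for any $p=rq$ with $1\le r,q<\infty$, $\frac1r+\frac1{r'}=1$, $\frac1q+\frac1{q'}=1$, \[|\rho_m(X_t)-\rho_m(Y_t)|\le\Vert V_t-U_t\Vert_{L^p(\mathbb{R}^D)}\cdot\Vert f_{Z_t}\Vert_{L^{q'}(\mathbb{R}^D)}^{1/r}\cdot\Vert f_m\Vert_{L^{r'}(0,1)}.\]
   Context: $x^+=\max\{x,0\}$. For a random variable $X$ with distribution function $F_X$, the quantile function is $Q_X(u)=\inf\{x\in\mathbb{R}:F_X(x)\ge u\}$, $u\in(0,1)$. $L^p$ norms are with respect to Lebesgue measure. *)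

theory Defs
  imports "HOL-Probability.Probability"
begin

definition epowr :: "ennreal \<Rightarrow> real \<Rightarrow> ennreal" where
  "epowr x a = (if x = \<infinity> then \<infinity> else ennreal (enn2real x powr a))"

definition Lnorm :: "'b measure \<Rightarrow> ennreal \<Rightarrow> ('b \<Rightarrow> ennreal) \<Rightarrow> ennreal" where
  "Lnorm M p f =
     (if p = \<infinity> then Inf {c. AE x in M. f x \<le> c}
      else epowr (\<integral>\<^sup>+ x. epowr (f x) (enn2real p) \<partial>M) (1 / enn2real p))"

definition conj_exp :: "real \<Rightarrow> ennreal" where
  "conj_exp r = (if r = 1 then \<infinity> else ennreal (r / (r - 1)))"

definition quantile :: "'a measure \<Rightarrow> ('a \<Rightarrow> real) \<Rightarrow> real \<Rightarrow> real" where
  "quantile M X u = Inf {x. u \<le> cdf (distr M borel X) x}"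

definition rho :: "real measure \<Rightarrow> 'a measure \<Rightarrow> ('a \<Rightarrow> real) \<Rightarrow> real" where
  "rho m M X = (\<integral>u. quantile M X u \<partial>m)"

end

theory Submission
  imports Defs
begin

text \<open>Hoelder's inequality for m(du) = f_m(u) du bounds |rho_m(X) - rho_m(Y)| by
  ||Q_X - Q_Y||_{L^r(0,1)} ||f_m||_{r'}. The quantile coupling is optimal for the convex cost
  |x - y|^r: as |d|^r is a mixture over a >= 0 of the hinge functions (d - a)^+ + (-d - a)^+, it
  suffices to compare the integral of (Q_X - Q_Y - a)^+ over (0,1) with E (X - Y - a)^+, and by Fubini
  this reduces to Leb {u. Q_Y(u) <= s, t < Q_X(u)} = (F_Y(s) - F_X(t))^+ <= P(Y <= s, t < X).
  Hence ||Q_X - Q_Y||_r <= (E |X - Y|^r)^(1/r). Finally |x^+ - y^+| <= |x - y| gives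
  E |X - Y|^r <= int |V - U|^r f_Z, which a second Hoelder inequality with exponents q, q' bounds
  by ||V - U||_p^r ||f_Z||_{q'}.\<close>

lemma epowr_ennreal: "0 \<le> x \<Longrightarrow> epowr (ennreal x) a = ennreal (x powr a)"
  by (simp add: epowr_def)

lemma epowr_one: "epowr x 1 = x"
  by (cases x) (auto simp: epowr_def)

lemma epowr_top: "epowr top a = top"
  by (simp add: epowr_def)

lemma epowr_eq_0_iff: "epowr x a = 0 \<longleftrightarrow> x = 0"
  by (cases x) (auto simp: epowr_def)

lemma epowr_mono: "0 \<le> a \<Longrightarrow> x \<le> y \<Longrightarrow> epowr x a \<le> epowr y a"
  by (cases x; cases y) (auto simp: epowr_def powr_mono2 ennreal_leI top_unique)

lemma epowr_mult: "0 < a \<Longrightarrow> epowr (x * y) a = epowr x a * epowr y a"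
  by (cases x; cases y)
    (auto simp: epowr_def ennreal_mult_top ennreal_top_mult ennreal_mult[symmetric] powr_mult)

lemma epowr_epowr: "0 < a \<Longrightarrow> epowr (epowr x a) b = epowr x (a * b)"
  by (cases x) (auto simp: epowr_def powr_powr)

lemma measurable_epowr[measurable]:
  assumes [measurable]: "f \<in> borel_measurable M"
  shows "(\<lambda>x. epowr (f x) a) \<in> borel_measurable M"
  unfolding epowr_def by measurable

lemma ennreal_Youngs_inequality:
  assumes "1 < p" "1 < q" "1/p + 1/q = 1"
  shows "x * y \<le> ennreal (1/p) * epowr x p + ennreal (1/q) * epowr y q"
proof (cases "x = top \<or> y = top")
  case True
  moreover have "ennreal (1/p) * top = top" "ennreal (1/q) * top = top"
    using assms by (simp_all add: ennreal_mult_top)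
  ultimately have "ennreal (1/p) * epowr x p + ennreal (1/q) * epowr y q = top"
    by (elim disjE) (simp_all add: epowr_top)
  then show ?thesis
    by (metis top_greatest)
next
  case False
  then obtain s t where st: "x = ennreal s" "0 \<le> s" "y = ennreal t" "0 \<le> t"
    by (metis ennreal_cases)
  have "ennreal (s * t) \<le> ennreal (1/p * s powr p + 1/q * t powr q)"
    using Youngs_inequality[OF assms st(2,4)] by (intro ennreal_leI) simp
  also have "\<dots> = ennreal (1/p) * epowr x p + ennreal (1/q) * epowr y q"
    using st assms by (simp add: epowr_ennreal ennreal_plus ennreal_mult[symmetric])
  finally show ?thesis
    using st by (simp add: ennreal_mult)
qed

lemma nn_integral_epowr_cmult:
  assumes [measurable]: "f \<in> borel_measurable M" and "0 \<le> c" "0 < p"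
  shows "(\<integral>\<^sup>+x. epowr (ennreal c * f x) p \<partial>M) = ennreal (c powr p) * (\<integral>\<^sup>+x. epowr (f x) p \<partial>M)"
  using assms by (simp add: epowr_mult epowr_ennreal nn_integral_cmult)

lemma nn_integral_epowr_normalize:
  assumes [measurable]: "f \<in> borel_measurable M" and p: "0 < p"
    and nonzero: "(\<integral>\<^sup>+x. epowr (f x) p \<partial>M) \<noteq> 0" and finite: "(\<integral>\<^sup>+x. epowr (f x) p \<partial>M) \<noteq> \<infinity>"
  obtains a where "0 < a" "epowr (\<integral>\<^sup>+x. epowr (f x) p \<partial>M) (1/p) = ennreal a"
    "(\<integral>\<^sup>+x. epowr (ennreal (1/a) * f x) p \<partial>M) = 1"
proof
  define A where "A = enn2real (\<integral>\<^sup>+x. epowr (f x) p \<partial>M)"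
  have "0 < A" and A_eq: "(\<integral>\<^sup>+x. epowr (f x) p \<partial>M) = ennreal A"
    using nonzero finite by (auto simp: A_def enn2real_positive_iff less_top zero_less_iff_neq_zero)
  then show "0 < A powr (1/p)"
    by simp
  show "epowr (\<integral>\<^sup>+x. epowr (f x) p \<partial>M) (1/p) = ennreal (A powr (1/p))"
    using \<open>0 < A\<close> by (simp add: A_eq epowr_ennreal)
  have "(1 / A powr (1/p)) powr p * A = 1"
    using \<open>0 < A\<close> p by (simp add: powr_divide powr_powr)
  then show "(\<integral>\<^sup>+x. epowr (ennreal (1 / A powr (1/p)) * f x) p \<partial>M) = 1"
    using \<open>0 < A\<close> p by (simp add: nn_integral_epowr_cmult A_eq ennreal_mult[symmetric])
qed

lemma nn_integral_Holder:
  assumes [measurable]: "f \<in> borel_measurable M" "g \<in> borel_measurable M"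
    and pq: "1 < p" "1 < q" "1/p + 1/q = 1"
  shows "(\<integral>\<^sup>+x. f x * g x \<partial>M)
    \<le> epowr (\<integral>\<^sup>+x. epowr (f x) p \<partial>M) (1/p) * epowr (\<integral>\<^sup>+x. epowr (g x) q \<partial>M) (1/q)"
    (is "?L \<le> epowr ?A _ * epowr ?B _")
proof -
  consider "?A = 0 \<or> ?B = 0" | "?A = \<infinity> \<or> ?B = \<infinity>" "?A \<noteq> 0" "?B \<noteq> 0"
    | "?A \<noteq> 0" "?B \<noteq> 0" "?A \<noteq> \<infinity>" "?B \<noteq> \<infinity>"
    by blast
  then show ?thesis
  proof cases
    case 1
    then have "AE x in M. f x * g x = 0"
      by (auto simp: nn_integral_0_iff_AE epowr_eq_0_iff elim!: eventually_mono)
    then have "?L = 0"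
      by (simp add: nn_integral_0_iff_AE)
    then show ?thesis
      by simp
  next
    case 2
    then have "epowr ?A (1/p) * epowr ?B (1/q) = top"
      by (auto simp: ennreal_mult_eq_top_iff epowr_eq_0_iff epowr_top)
    then show ?thesis
      by (metis top_greatest)
  next
    case 3
    obtain a where a: "0 < a" "epowr ?A (1/p) = ennreal a"
      and f1: "(\<integral>\<^sup>+x. epowr (ennreal (1/a) * f x) p \<partial>M) = 1"
      using nn_integral_epowr_normalize[of f M p] 3 pq by auto
    obtain b where b: "0 < b" "epowr ?B (1/q) = ennreal b"
      and g1: "(\<integral>\<^sup>+x. epowr (ennreal (1/b) * g x) q \<partial>M) = 1"
      using nn_integral_epowr_normalize[of g M q] 3 pq by auto
    have "?L = ennreal (a * b) * (\<integral>\<^sup>+x. (ennreal (1/a) * f x) * (ennreal (1/b) * g x) \<partial>M)"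
      using a b by (simp add: nn_integral_cmult[symmetric] ennreal_mult[symmetric] mult_ac)
    also have "\<dots> \<le> ennreal (a * b) * (\<integral>\<^sup>+x. ennreal (1/p) * epowr (ennreal (1/a) * f x) p
                                          + ennreal (1/q) * epowr (ennreal (1/b) * g x) q \<partial>M)"
      by (intro mult_left_mono nn_integral_mono ennreal_Youngs_inequality pq) simp
    also have "\<dots> = ennreal (a * b)"
      using pq by (simp add: nn_integral_add nn_integral_cmult f1 g1 ennreal_plus[symmetric])
    finally show ?thesis
      using a b by (simp add: ennreal_mult)
  qed
qed

lemma Lnorm_ennreal: "0 \<le> p \<Longrightarrow> Lnorm M (ennreal p) f = epowr (\<integral>\<^sup>+x. epowr (f x) p \<partial>M) (1/p)"
  by (simp add: Lnorm_def)

lemma nn_integral_mult_le_esssup: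
  assumes "f \<in> borel_measurable M"
  shows "(\<integral>\<^sup>+x. f x * g x \<partial>M) \<le> (\<integral>\<^sup>+x. f x \<partial>M) * esssup M g"
proof -
  have "(\<integral>\<^sup>+x. f x * g x \<partial>M) \<le> (\<integral>\<^sup>+x. f x * esssup M g \<partial>M)"
    using esssup_AE[of g M] by (intro nn_integral_mono_AE) (auto elim!: eventually_mono intro: mult_left_mono)
  then show ?thesis
    using assms by (simp add: nn_integral_multc)
qed

lemma nn_integral_mult_le_Lnorm:
  assumes [measurable]: "f \<in> borel_measurable M" "g \<in> borel_measurable M" and p: "1 \<le> p"
  shows "(\<integral>\<^sup>+x. f x * g x \<partial>M) \<le> Lnorm M (ennreal p) f * Lnorm M (conj_exp p) g"
proof (cases "p = 1")
  case True
  then show ?thesis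
    using nn_integral_mult_le_esssup[OF assms(1), of g]
    by (simp add: Lnorm_def conj_exp_def epowr_one esssup_eq_AE)
next
  case False
  then have "1 < p" "1 < p / (p - 1)" "1/p + 1 / (p / (p - 1)) = 1"
    using p by (auto simp: field_simps)
  from nn_integral_Holder[OF assms(1,2) this] show ?thesis
    using p False by (simp add: Lnorm_ennreal conj_exp_def)
qed

abbreviation lborel_01 :: "real measure" where
  "lborel_01 \<equiv> restrict_space lborel {0<..<1}"

lemma quantile_le_iff:
  assumes "prob_space M" "X \<in> borel_measurable M" "0 < u" "u < 1"
  shows "quantile M X u \<le> t \<longleftrightarrow> u \<le> cdf (distr M borel X) t"
proof -
  interpret cdf_distribution "distr M borel X"
    using assms(1,2) by (simp add: cdf_distribution_def prob_space.real_distribution_distr)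
  show ?thesis
    unfolding quantile_def by (rule pseudoinverse[OF assms(3,4), symmetric])
qed

lemma measurable_quantile:
  assumes "prob_space M" "X \<in> borel_measurable M"
  shows "quantile M X \<in> borel_measurable lborel_01"
proof -
  interpret cdf_distribution "distr M borel X"
    using assms by (simp add: cdf_distribution_def prob_space.real_distribution_distr)
  have "sets lborel_01 = sets (restrict_space borel {0<..<1::real})"
    by (simp add: sets_restrict_space)
  from measurable_cong_sets[OF this refl] show ?thesis
    unfolding quantile_def using measurable_CI by simp
qed

lemma nn_integral_if_eq_emeasure:
  assumes "{x \<in> space M. P x} \<in> sets M"
  shows "(\<integral>\<^sup>+x. (if P x then 1 else 0) \<partial>M) = emeasure M {x \<in> space M. P x}"
  by (subst nn_integral_indicator[symmetric, OF assms]) (auto intro!: nn_integral_cong simp: indicator_def)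

lemma emeasure_quantile_coupling_le:
  assumes M: "prob_space M" and [measurable]: "X \<in> borel_measurable M" "Y \<in> borel_measurable M"
  shows "emeasure lborel_01 {u \<in> space lborel_01. quantile M Y u \<le> s \<and> t < quantile M X u}
    \<le> emeasure M {\<omega> \<in> space M. Y \<omega> \<le> s \<and> t < X \<omega>}"
proof -
  interpret prob_space M by fact
  let ?FX = "cdf (distr M borel X)" and ?FY = "cdf (distr M borel Y)"
  have cdf_eq: "cdf (distr M borel Z) x = prob {\<omega> \<in> space M. Z \<omega> \<le> x}"
    if "Z \<in> borel_measurable M" for Z x
    using that by (simp add: cdf_def measure_distr vimage_def Int_def conj_commute)
  have "{u \<in> space lborel_01. quantile M Y u \<le> s \<and> t < quantile M X u} \<subseteq> {?FX t<..?FY s}"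
  proof
    fix u assume "u \<in> {u \<in> space lborel_01. quantile M Y u \<le> s \<and> t < quantile M X u}"
    then have u: "0 < u" "u < 1" and "quantile M Y u \<le> s" "\<not> quantile M X u \<le> t"
      by auto
    then show "u \<in> {?FX t<..?FY s}"
      using quantile_le_iff[OF M _ u] by (simp add: not_le)
  qed
  then have "emeasure lborel_01 {u \<in> space lborel_01. quantile M Y u \<le> s \<and> t < quantile M X u}
      \<le> emeasure lborel {?FX t<..?FY s}"
    by (subst emeasure_restrict_space) (auto intro!: emeasure_mono)
  also have "\<dots> \<le> ennreal (max (?FY s - ?FX t) 0)"
    by (cases "?FX t \<le> ?FY s") auto
  also have "\<dots> \<le> ennreal (prob {\<omega> \<in> space M. Y \<omega> \<le> s \<and> t < X \<omega>})"
  proof (intro ennreal_leI max.boundedI)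
    have "prob {\<omega> \<in> space M. Y \<omega> \<le> s}
        \<le> prob ({\<omega> \<in> space M. Y \<omega> \<le> s \<and> t < X \<omega>} \<union> {\<omega> \<in> space M. X \<omega> \<le> t})"
      by (intro finite_measure_mono) auto
    also have "\<dots> \<le> prob {\<omega> \<in> space M. Y \<omega> \<le> s \<and> t < X \<omega>} + prob {\<omega> \<in> space M. X \<omega> \<le> t}"
      by (intro measure_subadditive) auto
    finally show "?FY s - ?FX t \<le> prob {\<omega> \<in> space M. Y \<omega> \<le> s \<and> t < X \<omega>}"
      by (simp add: cdf_eq)
  qed simp
  finally show ?thesis
    by (simp add: emeasure_eq_measure)
qed

lemma ennreal_max_diff_eq_nn_integral:
  "ennreal (max (x - y) 0) = (\<integral>\<^sup>+t. (if y \<le> t \<and> t < x then 1 else 0) \<partial>lborel)"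
proof -
  have "(\<integral>\<^sup>+t. (if y \<le> t \<and> t < x then 1 else 0) \<partial>lborel) = emeasure lborel {t. y \<le> t \<and> t < x}"
    by (subst nn_integral_if_eq_emeasure) simp_all
  also have "{t. y \<le> t \<and> t < x} = {y..<x}"
    by auto
  finally show ?thesis
    by (cases "y \<le> x") auto
qed

lemma nn_integral_quantile_hinge_le:
  assumes M: "prob_space M" and [measurable]: "X \<in> borel_measurable M" "Y \<in> borel_measurable M"
  shows "(\<integral>\<^sup>+u. ennreal (max (quantile M X u - quantile M Y u - a) 0) \<partial>lborel_01)
    \<le> (\<integral>\<^sup>+\<omega>. ennreal (max (X \<omega> - Y \<omega> - a) 0) \<partial>M)"
proof -
  note [measurable] = measurable_quantile[OF M]
  interpret L: pair_sigma_finite lborel_01 lborel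
    unfolding pair_sigma_finite_def
    by (simp add: sigma_finite_measure_restrict_space sigma_finite_lborel)
  interpret P: pair_sigma_finite M lborel
    unfolding pair_sigma_finite_def
    by (simp add: prob_space_imp_sigma_finite[OF M] sigma_finite_lborel)
  have hinge: "ennreal (max (x - y - a) 0) = (\<integral>\<^sup>+t. (if y + a \<le> t \<and> t < x then 1 else 0) \<partial>lborel)"
    for x y
    using ennreal_max_diff_eq_nn_integral[of x "y + a"] by (simp add: algebra_simps)
  have "(\<integral>\<^sup>+u. ennreal (max (quantile M X u - quantile M Y u - a) 0) \<partial>lborel_01)
    = (\<integral>\<^sup>+u. (\<integral>\<^sup>+t. (if quantile M Y u + a \<le> t \<and> t < quantile M X u then 1 else 0) \<partial>lborel) \<partial>lborel_01)"
    by (simp only: hinge)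
  also have "\<dots> = (\<integral>\<^sup>+t. (\<integral>\<^sup>+u. (if quantile M Y u + a \<le> t \<and> t < quantile M X u then 1 else 0) \<partial>lborel_01) \<partial>lborel)"
    by (rule L.Fubini'[symmetric]) measurable
  also have "\<dots> \<le> (\<integral>\<^sup>+t. (\<integral>\<^sup>+\<omega>. (if Y \<omega> + a \<le> t \<and> t < X \<omega> then 1 else 0) \<partial>M) \<partial>lborel)"
  proof (rule nn_integral_mono)
    fix t
    have "(\<integral>\<^sup>+u. (if quantile M Y u + a \<le> t \<and> t < quantile M X u then 1 else 0) \<partial>lborel_01)
      = emeasure lborel_01 {u \<in> space lborel_01. quantile M Y u \<le> t - a \<and> t < quantile M X u}"
      by (subst nn_integral_if_eq_emeasure) (measurable, simp add: le_diff_eq)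
    also have "\<dots> \<le> emeasure M {\<omega> \<in> space M. Y \<omega> \<le> t - a \<and> t < X \<omega>}"
      by (rule emeasure_quantile_coupling_le) fact+
    also have "\<dots> = (\<integral>\<^sup>+\<omega>. (if Y \<omega> + a \<le> t \<and> t < X \<omega> then 1 else 0) \<partial>M)"
      by (subst nn_integral_if_eq_emeasure) (measurable, simp add: le_diff_eq)
    finally show "(\<integral>\<^sup>+u. (if quantile M Y u + a \<le> t \<and> t < quantile M X u then 1 else 0) \<partial>lborel_01)
      \<le> (\<integral>\<^sup>+\<omega>. (if Y \<omega> + a \<le> t \<and> t < X \<omega> then 1 else 0) \<partial>M)" .
  qed
  also have "\<dots> = (\<integral>\<^sup>+\<omega>. (\<integral>\<^sup>+t. (if Y \<omega> + a \<le> t \<and> t < X \<omega> then 1 else 0) \<partial>lborel) \<partial>M)"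
    by (rule P.Fubini') measurable
  also have "\<dots> = (\<integral>\<^sup>+\<omega>. ennreal (max (X \<omega> - Y \<omega> - a) 0) \<partial>M)"
    by (simp only: hinge)
  finally show ?thesis .
qed

text \<open>The kernel \<open>r (r - 1) a^(r-2)\<close> is the second derivative of \<open>a^r\<close>, so the hinge mixture
  below is Taylor's formula with integral remainder; for \<open>r = 1\<close> it degenerates to a point mass at 0.\<close>

lemma has_integral_powr_kernel:
  fixes r d :: real
  assumes r: "1 < r" and d: "0 \<le> d"
  shows "((\<lambda>a. r * (r - 1) * a powr (r - 2) * (d - a)) has_integral d powr r) {0..d}"
proof -
  have powr_plus_1: "x powr (s + 1) = x * x powr s" if "0 \<le> x" for x s :: real
    using that powr_mult_base[of x s] by (cases "x = 0") (auto simp: add.commute)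
  have powr_r_minus_1: "x powr (r - 1) = x * x powr (r - 2)" and powr_r: "x powr r = x * x powr (r - 1)"
    if "0 \<le> x" for x :: real
    using powr_plus_1[OF that, of "r - 2"] powr_plus_1[OF that, of "r - 1"] by simp_all
  have int: "((\<lambda>a. r * (r - 1) * (d * a powr (r - 2) - a powr (r - 1))) has_integral
      r * (r - 1) * (d * (d powr (r - 1) / (r - 1)) - d powr r / r)) {0..d}"
    using has_integral_powr_from_0[of "r - 2" d] has_integral_powr_from_0[of "r - 1" d] r d
    by (intro has_integral_mult_right has_integral_diff) simp_all
  have integral_eq: "r * (r - 1) * (d * (d powr (r - 1) / (r - 1)) - d powr r / r) = d powr r"
    using r d powr_r[of d] by (simp add: field_simps)
  have integrand: "r * (r - 1) * (d * a powr (r - 2) - a powr (r - 1)) = r * (r - 1) * a powr (r - 2) * (d - a)"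
    if "a \<in> {0..d}" for a
    using that by (simp add: powr_r_minus_1 algebra_simps)
  show ?thesis
    using has_integral_eq[OF integrand int] unfolding integral_eq .
qed

lemma abs_powr_eq_nn_integral_hinge:
  fixes r d :: real
  assumes r: "1 < r"
  shows "ennreal (\<bar>d\<bar> powr r) = (\<integral>\<^sup>+a. ennreal (if 0 < a then r * (r - 1) * a powr (r - 2) else 0)
      * (ennreal (max (d - a) 0) + ennreal (max (- d - a) 0)) \<partial>lborel)"
proof -
  have nonneg: "ennreal (x powr r) = (\<integral>\<^sup>+a. ennreal (if 0 < a then r * (r - 1) * a powr (r - 2) else 0)
      * (ennreal (max (x - a) 0) + ennreal (max (- x - a) 0)) \<partial>lborel)" if x: "0 \<le> x" for x
  proof -
    have "(\<integral>\<^sup>+a. ennreal (if 0 < a then r * (r - 1) * a powr (r - 2) else 0)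
        * (ennreal (max (x - a) 0) + ennreal (max (- x - a) 0)) \<partial>lborel)
      = (\<integral>\<^sup>+a. ennreal (r * (r - 1) * a powr (r - 2) * (x - a)) * indicator {0..x} a \<partial>lborel)"
      using r x by (intro nn_integral_cong) (auto simp: indicator_def max_def ennreal_neg ennreal_mult[symmetric])
    also have "\<dots> = ennreal (x powr r)"
      using r by (intro nn_integral_has_integral_lebesgue' has_integral_powr_kernel x) auto
    finally show ?thesis ..
  qed
  show ?thesis
  proof (cases "0 \<le> d")
    case False
    then show ?thesis
      using nonneg[of "- d"] by (simp add: add.commute)
  qed (simp add: nonneg)
qed

lemma abs_powr_hinge_mixture:
  fixes r :: real
  assumes r: "1 \<le> r"
  obtains N :: "real measure" where "sigma_finite_measure N" "sets N = sets borel"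
    "\<And>d. ennreal (\<bar>d\<bar> powr r) = (\<integral>\<^sup>+a. ennreal (max (d - a) 0) + ennreal (max (- d - a) 0) \<partial>N)"
proof (cases "r = 1")
  case True
  show ?thesis
  proof (rule that[of "return borel 0"])
    show "sigma_finite_measure (return borel (0::real))"
      by (simp add: prob_space_imp_sigma_finite prob_space_return)
    fix d :: real
    show "ennreal (\<bar>d\<bar> powr r) = (\<integral>\<^sup>+a. ennreal (max (d - a) 0) + ennreal (max (- d - a) 0) \<partial>return borel 0)"
      using True by (simp add: nn_integral_return max_def)
  qed simp
next
  case False
  define k where "k a = ennreal (if 0 < a then r * (r - 1) * a powr (r - 2) else 0)" for a :: real
  have [measurable]: "k \<in> borel_measurable borel"
    unfolding k_def by measurable
  show ?thesis
  proof (rule that[of "density lborel k"])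
    show "sigma_finite_measure (density lborel k)"
      by (simp add: sigma_finite_measure.sigma_finite_iff_density_finite'[OF sigma_finite_lborel] k_def)
    fix d :: real
    show "ennreal (\<bar>d\<bar> powr r) = (\<integral>\<^sup>+a. ennreal (max (d - a) 0) + ennreal (max (- d - a) 0) \<partial>density lborel k)"
      using False r by (simp add: nn_integral_density abs_powr_eq_nn_integral_hinge k_def)
  qed simp
qed

lemma nn_integral_quantile_abs_powr_le:
  assumes M: "prob_space M" and [measurable]: "X \<in> borel_measurable M" "Y \<in> borel_measurable M"
    and r: "1 \<le> r"
  shows "(\<integral>\<^sup>+u. ennreal (\<bar>quantile M X u - quantile M Y u\<bar> powr r) \<partial>lborel_01)
    \<le> (\<integral>\<^sup>+\<omega>. ennreal (\<bar>X \<omega> - Y \<omega>\<bar> powr r) \<partial>M)"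
proof -
  note [measurable] = measurable_quantile[OF M]
  obtain N where N: "sigma_finite_measure N" and [measurable_cong]: "sets N = sets borel"
    and mixture: "\<And>d. ennreal (\<bar>d\<bar> powr r) = (\<integral>\<^sup>+a. ennreal (max (d - a) 0) + ennreal (max (- d - a) 0) \<partial>N)"
    using abs_powr_hinge_mixture[OF r] by blast
  have mixture': "ennreal (\<bar>x - y\<bar> powr r)
      = (\<integral>\<^sup>+a. ennreal (max (x - y - a) 0) + ennreal (max (y - x - a) 0) \<partial>N)" for x y
    using mixture[of "x - y"] by simp
  interpret L: pair_sigma_finite lborel_01 N
    unfolding pair_sigma_finite_def using N by (simp add: sigma_finite_measure_restrict_space sigma_finite_lborel)
  interpret P: pair_sigma_finite M N
    unfolding pair_sigma_finite_def using N by (simp add: prob_space_imp_sigma_finite[OF M])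
  let ?QX = "quantile M X" and ?QY = "quantile M Y"
  have "(\<integral>\<^sup>+u. ennreal (\<bar>?QX u - ?QY u\<bar> powr r) \<partial>lborel_01)
    = (\<integral>\<^sup>+a. (\<integral>\<^sup>+u. ennreal (max (?QX u - ?QY u - a) 0) + ennreal (max (?QY u - ?QX u - a) 0) \<partial>lborel_01) \<partial>N)"
    unfolding mixture' by (rule L.Fubini'[symmetric]) measurable
  also have "\<dots> = (\<integral>\<^sup>+a. (\<integral>\<^sup>+u. ennreal (max (?QX u - ?QY u - a) 0) \<partial>lborel_01)
      + (\<integral>\<^sup>+u. ennreal (max (?QY u - ?QX u - a) 0) \<partial>lborel_01) \<partial>N)"
    by (intro nn_integral_cong nn_integral_add) measurable
  also have "\<dots> \<le> (\<integral>\<^sup>+a. (\<integral>\<^sup>+\<omega>. ennreal (max (X \<omega> - Y \<omega> - a) 0) \<partial>M)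
      + (\<integral>\<^sup>+\<omega>. ennreal (max (Y \<omega> - X \<omega> - a) 0) \<partial>M) \<partial>N)"
    by (intro nn_integral_mono add_mono nn_integral_quantile_hinge_le M) measurable
  also have "\<dots> = (\<integral>\<^sup>+a. (\<integral>\<^sup>+\<omega>. ennreal (max (X \<omega> - Y \<omega> - a) 0) + ennreal (max (Y \<omega> - X \<omega> - a) 0) \<partial>M) \<partial>N)"
    by (intro nn_integral_cong nn_integral_add[symmetric]) measurable
  also have "\<dots> = (\<integral>\<^sup>+\<omega>. ennreal (\<bar>X \<omega> - Y \<omega>\<bar> powr r) \<partial>M)"
    unfolding mixture' by (rule P.Fubini') measurable
  finally show ?thesis .
qed

lemma abs_rho_diff_le:
  assumes M: "prob_space M" and [measurable]: "X \<in> borel_measurable M" "Y \<in> borel_measurable M"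
    and [measurable]: "fm \<in> borel_measurable borel"
    and m: "m = density lborel_01 (\<lambda>u. ennreal (fm u))"
    and "integrable m (quantile M X)" "integrable m (quantile M Y)"
    and r: "1 \<le> r"
  shows "ennreal \<bar>rho m M X - rho m M Y\<bar>
    \<le> epowr (\<integral>\<^sup>+\<omega>. ennreal (\<bar>X \<omega> - Y \<omega>\<bar> powr r) \<partial>M) (1/r) * Lnorm lborel_01 (conj_exp r) (\<lambda>u. ennreal (fm u))"
proof -
  note [measurable] = measurable_quantile[OF M]
  have [measurable]: "(\<lambda>u. ennreal (fm u)) \<in> borel_measurable lborel_01"
    by (intro measurable_restrict_space1) measurable
  let ?QX = "quantile M X" and ?QY = "quantile M Y"
  have "\<bar>rho m M X - rho m M Y\<bar> = \<bar>\<integral>u. ?QX u - ?QY u \<partial>m\<bar>"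
    using assms by (simp add: rho_def)
  also have "\<dots> \<le> (\<integral>u. \<bar>?QX u - ?QY u\<bar> \<partial>m)"
    by (rule integral_abs_bound)
  finally have "ennreal \<bar>rho m M X - rho m M Y\<bar> \<le> (\<integral>\<^sup>+u. ennreal \<bar>?QX u - ?QY u\<bar> \<partial>m)"
    using assms by (simp add: nn_integral_eq_integral ennreal_leI)
  also have "\<dots> = (\<integral>\<^sup>+u. ennreal \<bar>?QX u - ?QY u\<bar> * ennreal (fm u) \<partial>lborel_01)"
    unfolding m by (simp add: nn_integral_density mult.commute)
  also have "\<dots> \<le> Lnorm lborel_01 (ennreal r) (\<lambda>u. ennreal \<bar>?QX u - ?QY u\<bar>) * Lnorm lborel_01 (conj_exp r) (\<lambda>u. ennreal (fm u))"
    by (rule nn_integral_mult_le_Lnorm) (use r in measurable)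
  also have "Lnorm lborel_01 (ennreal r) (\<lambda>u. ennreal \<bar>?QX u - ?QY u\<bar>)
      = epowr (\<integral>\<^sup>+u. ennreal (\<bar>?QX u - ?QY u\<bar> powr r) \<partial>lborel_01) (1/r)"
    using r by (simp add: Lnorm_ennreal epowr_ennreal)
  also have "\<dots> \<le> epowr (\<integral>\<^sup>+\<omega>. ennreal (\<bar>X \<omega> - Y \<omega>\<bar> powr r) \<partial>M) (1/r)"
    using r by (intro epowr_mono nn_integral_quantile_abs_powr_le M) measurable
  finally show ?thesis
    by (simp add: mult_right_mono)
qed

lemma nn_integral_distributed_powr_le:
  assumes Z: "distributed M N Z fZ" and [measurable]: "h \<in> borel_measurable N"
    and h: "\<And>z. 0 \<le> h z" and r: "0 < r" and q: "1 \<le> q"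
  shows "(\<integral>\<^sup>+\<omega>. ennreal (h (Z \<omega>) powr r) \<partial>M)
    \<le> epowr (Lnorm N (ennreal (r * q)) (\<lambda>z. ennreal (h z))) r * Lnorm N (conj_exp q) fZ"
proof -
  note [measurable] = distributed_measurable[OF Z] distributed_borel_measurable[OF Z]
  have "(\<integral>\<^sup>+\<omega>. ennreal (h (Z \<omega>) powr r) \<partial>M) = (\<integral>\<^sup>+z. ennreal (h z powr r) * fZ z \<partial>N)"
    by (subst distributed_nn_integral[OF Z, symmetric]) (auto simp: mult.commute)
  also have "\<dots> \<le> Lnorm N (ennreal q) (\<lambda>z. ennreal (h z powr r)) * Lnorm N (conj_exp q) fZ"
    by (rule nn_integral_mult_le_Lnorm) (use q in measurable)
  also have "Lnorm N (ennreal q) (\<lambda>z. ennreal (h z powr r)) = epowr (Lnorm N (ennreal (r * q)) (\<lambda>z. ennreal (h z))) r"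
    using r q h by (simp add: Lnorm_ennreal epowr_ennreal epowr_epowr powr_powr)
  finally show ?thesis .
qed

theorem proposition3p1:
  fixes M :: "'a measure" and Z :: "'a \<Rightarrow> 'd::euclidean_space"
    and fZ :: "'d \<Rightarrow> ennreal" and V U :: "'d \<Rightarrow> real"
    and m :: "real measure" and fm :: "real \<Rightarrow> real"
    and p r q :: real
  assumes "prob_space M"
    and "distributed M lborel Z fZ"
    and "V \<in> borel_measurable borel" and "U \<in> borel_measurable borel"
    and "fm \<in> borel_measurable borel" and "\<And>u. fm u \<ge> 0"
    and "m = density (restrict_space lborel {0<..<1}) (\<lambda>u. ennreal (fm u))"
    and "prob_space m"
    and "integrable m (quantile M (\<lambda>\<omega>. max (V (Z \<omega>)) 0))"
    and "integrable m (quantile M (\<lambda>\<omega>. max (U (Z \<omega>)) 0))"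
    and "1 \<le> r" and "1 \<le> q" and "p = r * q"
  shows "ennreal \<bar>rho m M (\<lambda>\<omega>. max (V (Z \<omega>)) 0) - rho m M (\<lambda>\<omega>. max (U (Z \<omega>)) 0)\<bar>
     \<le> Lnorm lborel (ennreal p) (\<lambda>x. ennreal \<bar>V x - U x\<bar>)
       * epowr (Lnorm lborel (conj_exp q) fZ) (1 / r)
       * Lnorm (restrict_space lborel {0<..<1}) (conj_exp r) (\<lambda>u. ennreal (fm u))"
proof -
  have [measurable]: "Z \<in> borel_measurable M"
    using distributed_measurable[OF assms(2)] by simp
  note [measurable] = assms(3,4)
  let ?X = "\<lambda>\<omega>. max (V (Z \<omega>)) 0" and ?Y = "\<lambda>\<omega>. max (U (Z \<omega>)) 0"
  let ?E = "\<integral>\<^sup>+\<omega>. ennreal (\<bar>?X \<omega> - ?Y \<omega>\<bar> powr r) \<partial>M"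
  let ?L = "Lnorm lborel (ennreal p) (\<lambda>x. ennreal \<bar>V x - U x\<bar>)"
  let ?N = "Lnorm lborel (conj_exp q) fZ"
  have r: "0 < r"
    using \<open>1 \<le> r\<close> by simp
  have "?E \<le> (\<integral>\<^sup>+\<omega>. ennreal (\<bar>V (Z \<omega>) - U (Z \<omega>)\<bar> powr r) \<partial>M)"
    using r by (intro nn_integral_mono ennreal_leI powr_mono2) (auto simp: max_def)
  also have "\<dots> \<le> epowr ?L r * ?N"
    unfolding \<open>p = r * q\<close> using r \<open>1 \<le> q\<close>
    by (intro nn_integral_distributed_powr_le[OF assms(2)]) auto
  finally have "epowr ?E (1/r) \<le> epowr (epowr ?L r * ?N) (1/r)"
    using r by (intro epowr_mono) auto
  also have "\<dots> = ?L * epowr ?N (1/r)"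
    using r by (simp add: epowr_mult epowr_epowr epowr_one)
  finally have moment_bound: "epowr ?E (1/r) \<le> ?L * epowr ?N (1/r)" .
  have "ennreal \<bar>rho m M ?X - rho m M ?Y\<bar>
      \<le> epowr ?E (1/r) * Lnorm lborel_01 (conj_exp r) (\<lambda>u. ennreal (fm u))"
    by (rule abs_rho_diff_le[OF assms(1) _ _ assms(5,7,9,10,11)]) measurable
  also have "\<dots> \<le> ?L * epowr ?N (1/r) * Lnorm lborel_01 (conj_exp r) (\<lambda>u. ennreal (fm u))"
    using moment_bound by (rule mult_right_mono) simp
  finally show ?thesis .
qed

end
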